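(* Let $d\in\mathbb{N}$, let $D_d\subset\mathbb{R}^d$ be bounded with Lebesgue measure $\lambda_d(D_d)=1$, and let $R_d=\operatorname{rad}(D_d)/\sqrt{d}$. Let $K$ be the convex hull of $n$ points $x_1,\dots,x_n\in D_d$ and let $\delta>0$. Then \[ \lambda_d(K_\delta) \,<\, n\, \Bigl((R_d + 2\delta) \sqrt{\tfrac{\pi e}{2}} \Bigr)^d . \]
   Context: For $A\subset\mathbb{R}^d$ and $\delta>0$, $A_\delta=\{x\in\mathbb{R}^d \mid \operatorname{dist}(x,A)\le \delta\sqrt{d}\}$, where $\operatorname{dist}(x,A)=\inf_{a\in A}\|x-a\|_2$. The radius of a set $D\subset\mathbb{R}^d$ is $\operatorname{rad}(D)=\inf_{x\in\mathbb{R}^d}\sup_{y\in D}\|y-x\|_2$. $\lambda_d$ denotes $d$-dimensional Lebesgue measure. *)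

theory Defs
  imports "HOL-Analysis.Analysis"
begin

text \<open>Parallel body A_delta = points within distance delta * sqrt d of A (d = dimension).
  For nonempty A, infdist is the usual distance to the set.\<close>
definition parallel_body :: "'a::euclidean_space set \<Rightarrow> real \<Rightarrow> 'a set" where
  "parallel_body A \<delta> = {x. infdist x A \<le> \<delta> * sqrt (real DIM('a))}"

definition rad :: "'a::euclidean_space set \<Rightarrow> real" where
  "rad D = (INF x. (SUP y\<in>D. dist y x))"

end

theory Submission
  imports Defs
begin

text \<open>The centre c of a smallest ball containing D exists, so the points x_i lie in
  cball c (rad D). A point of a convex hull lies in the ball with diameter [x_i, c] for some
  vertex x_i (Elekes): otherwise it would see every vertex at an acute angle from c, which is
  impossible for a convex combination. Hence K_\<delta> is covered by n balls of radius
  rad D / 2 + \<delta> sqrt d = (sqrt d / 2) (R_d + 2 \<delta>). Finally the volume of the ball of radius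
  sqrt d / 2 is less than (pi e / 2)^(d/2), since Gamma (x + 1) > x^x e^-x.\<close>

lemma Gamma_plus_one_gt_powr_exp:
  fixes x :: real
  assumes x: "x > 0"
  shows "x powr x * exp (-x) < Gamma (x + 1)"
proof -
  have Gamma: "((\<lambda>t. t powr x / exp t) has_integral Gamma (x + 1)) {0..}"
    using Gamma_integral_real[of "x + 1"] x by simp
  have "((\<lambda>t. x powr x * exp (-1 * t)) has_integral x powr x * (exp (-1 * x) / 1)) {x..}"
    by (intro has_integral_mult_right has_integral_exp_minus_to_infinity) auto
  then have tail: "((\<lambda>t. if t \<in> {x..} then x powr x * exp (-t) else 0)
      has_integral x powr x * exp (-x)) {0..}"
    using x by (subst has_integral_restrict) auto
  text \<open>A positive bump on [x/4, x/2], where the tail minorant vanishes, makes the bound strict.\<close>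
  define c where "c = (x / 4) powr x * exp (-x)"
  have "((\<lambda>t. c) has_integral x / 4 * c) {x/4..x/2}"
    using has_integral_const_real[of c "x/4" "x/2"] x by simp
  then have bump: "((\<lambda>t. if t \<in> {x/4..x/2} then c else 0) has_integral x / 4 * c) {0..}"
    using x by (subst has_integral_restrict) auto
  have minorant: "(if t \<in> {x..} then x powr x * exp (-t) else 0)
      + (if t \<in> {x/4..x/2} then c else 0) \<le> t powr x / exp t" if "t \<in> {0..}" for t
  proof (cases "t \<ge> x")
    case True
    then have "x powr x * exp (-t) \<le> t powr x / exp t"
      using x by (simp add: exp_minus divide_simps powr_mono2)
    then show ?thesis using True x by auto
  next
    case False
    have "c \<le> t powr x / exp t" if "t \<in> {x/4..x/2}"
    proof -
      have "(x / 4) powr x \<le> t powr x" using that x by (intro powr_mono2) auto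
      moreover have "exp (-x) \<le> exp (-t)" using that x by simp
      ultimately have "c \<le> t powr x * exp (-t)" unfolding c_def by (intro mult_mono) auto
      then show ?thesis by (simp add: exp_minus divide_inverse)
    qed
    then show ?thesis using False that by auto
  qed
  have "x powr x * exp (-x) + x / 4 * c \<le> Gamma (x + 1)"
    by (rule has_integral_le[OF has_integral_add[OF tail bump] Gamma]) (rule minorant)
  moreover have "x / 4 * c > 0" using x unfolding c_def by simp
  ultimately show ?thesis by linarith
qed

lemma unit_ball_vol_times_half_sqrt_dim_less:
  assumes d: "d \<ge> (1::nat)"
  shows "unit_ball_vol (real d) * (sqrt (real d) / 2) ^ d < sqrt (pi * exp 1 / 2) ^ d"
proof -
  define x where "x = real d / 2"
  have x: "x > 0" using d by (simp add: x_def)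
  have power_as_powr: "a ^ d = (a\<^sup>2) powr x" if "a > 0" for a :: real
  proof -
    have "a ^ d = a powr (2 * x)" using that by (simp add: x_def powr_realpow)
    also have "\<dots> = (a powr 2) powr x" by (simp add: powr_powr)
    also have "a powr 2 = a\<^sup>2" using that by (simp add: powr_realpow)
    finally show ?thesis .
  qed
  have radius: "(sqrt (real d) / 2) ^ d = (x / 2) powr x"
    using d by (subst power_as_powr) (auto simp: power_divide x_def)
  have bound: "sqrt (pi * exp 1 / 2) ^ d = (pi * exp 1 / 2) powr x"
    by (subst power_as_powr) (auto simp: power_divide)
  have "unit_ball_vol (real d) * (x / 2) powr x = pi powr x / Gamma (x + 1) * (x / 2) powr x"
    by (simp add: unit_ball_vol_def x_def)
  also have "\<dots> < pi powr x / (x powr x * exp (-x)) * (x / 2) powr x"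
    using Gamma_plus_one_gt_powr_exp[OF x] x
    by (intro mult_strict_right_mono divide_strict_left_mono) auto
  also have "\<dots> = (pi * exp 1 / 2) powr x"
    using x by (simp add: powr_mult powr_divide exp_powr_real exp_minus field_simps)
  finally show ?thesis using radius bound by simp
qed

lemma rad_approx_cball:
  fixes D :: "'a::euclidean_space set"
  assumes "bounded D" "D \<noteq> {}" "e > 0"
  shows "\<exists>x. D \<subseteq> cball x (rad D + e)"
proof -
  have bdd: "bdd_above ((\<lambda>y. dist y x) ` D)" for x
  proof -
    obtain b where "\<forall>y\<in>D. dist x y \<le> b" using assms(1) bounded_any_center by blast
    then show ?thesis by (auto simp: dist_commute intro!: bdd_aboveI2[of _ _ b])
  qed
  then have "0 \<le> (SUP y\<in>D. dist y x)" for x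
    using assms(2) by (meson cSUP_upper ex_in_conv order_trans zero_le_dist)
  then have "bdd_below (range (\<lambda>x. SUP y\<in>D. dist y x))" by (intro bdd_belowI[of _ 0]) auto
  moreover have "(INF x. SUP y\<in>D. dist y x) < rad D + e" using assms(3) by (simp add: rad_def)
  ultimately obtain x where "(SUP y\<in>D. dist y x) < rad D + e"
    by (subst (asm) cINF_less_iff) auto
  then have "dist x y \<le> rad D + e" if "y \<in> D" for y
    using cSUP_upper[OF that bdd[of x]] dist_commute[of x y] by linarith
  then show ?thesis by (metis mem_cball subsetI)
qed

lemma bounded_subset_cball_rad:
  fixes D :: "'a::euclidean_space set"
  assumes "bounded D" "D \<noteq> {}"
  shows "\<exists>c. D \<subseteq> cball c (rad D)"
proof -
  define F where "F = (\<lambda>n::nat. \<Inter>y\<in>D. cball y (rad D + 1 / Suc n))"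
  have "\<Inter>(range F) \<noteq> {}"
  proof (rule compact_nest)
    fix n
    obtain y where "y \<in> D" using assms(2) by blast
    then have "F n \<subseteq> cball y (rad D + 1 / Suc n)" unfolding F_def by blast
    then have "bounded (F n)" by (rule bounded_subset[OF bounded_cball])
    moreover have "closed (F n)" unfolding F_def by (simp add: closed_INT)
    ultimately show "compact (F n)" by (simp add: compact_eq_bounded_closed)
    obtain x where "D \<subseteq> cball x (rad D + 1 / Suc n)"
      using rad_approx_cball[OF assms, of "1 / Suc n"] by auto
    then have "x \<in> F n" unfolding F_def by (auto simp: dist_commute)
    then show "F n \<noteq> {}" by blast
  next
    fix m n :: nat
    assume "m \<le> n"
    then have "1 / real (Suc n) \<le> 1 / Suc m" by (simp add: frac_le)
    then show "F n \<subseteq> F m" unfolding F_def by (fastforce simp: mem_cball)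
  qed
  then obtain c where c: "\<And>n. c \<in> F n" by blast
  have "dist c y \<le> rad D" if "y \<in> D" for y
  proof (rule field_le_epsilon)
    fix e :: real
    assume "e > 0"
    then obtain n where "1 / real (Suc n) < e" using nat_approx_posE by blast
    moreover have "dist c y \<le> rad D + 1 / Suc n"
      using c[of n] that unfolding F_def by (auto simp: dist_commute)
    ultimately show "dist c y \<le> rad D + e" by linarith
  qed
  then show ?thesis by (metis mem_cball subsetI)
qed

lemma norm_minus_midpoint_power2:
  fixes y p c :: "'a::real_inner"
  shows "(norm (y - midpoint p c))\<^sup>2 = (y - p) \<bullet> (y - c) + (dist p c / 2)\<^sup>2"
proof -
  have "(norm (y - (1/2) *\<^sub>R (p + c)))\<^sup>2 = (y - p) \<bullet> (y - c) + (norm (p - c))\<^sup>2 / 4"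
    by (simp add: power2_norm_eq_inner inner_diff_left inner_diff_right inner_add_left
        inner_add_right inner_commute algebra_simps field_simps)
  then show ?thesis by (simp add: midpoint_def dist_norm power_divide)
qed

lemma convex_hull_subset_UN_diameter_cballs:
  fixes S :: "'a::real_inner set"
  assumes "finite S"
  shows "convex hull S \<subseteq> (\<Union>p\<in>S. cball (midpoint p c) (dist p c / 2))"
proof
  fix y
  assume "y \<in> convex hull S"
  then obtain u where u0: "\<forall>p\<in>S. 0 \<le> u p" and u1: "sum u S = 1"
    and y: "(\<Sum>p\<in>S. u p *\<^sub>R p) = y"
    using assms by (auto simp: convex_hull_finite)
  have "(\<Sum>p\<in>S. u p * ((y - p) \<bullet> (y - c))) = (\<Sum>p\<in>S. u p *\<^sub>R (y - p)) \<bullet> (y - c)"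
    by (simp add: inner_sum_left)
  also have "(\<Sum>p\<in>S. u p *\<^sub>R (y - p)) = 0"
    using u1 y by (simp add: scaleR_diff_right sum_subtractf flip: scaleR_sum_left)
  finally have weighted_sum: "(\<Sum>p\<in>S. u p * ((y - p) \<bullet> (y - c))) = 0" by simp
  have "\<exists>p\<in>S. (y - p) \<bullet> (y - c) \<le> 0"
  proof (rule ccontr)
    assume "\<not> ?thesis"
    then have pos: "\<forall>p\<in>S. (y - p) \<bullet> (y - c) > 0" by (simp add: not_le)
    have "\<exists>q\<in>S. u q \<noteq> 0" using u1 by (metis sum.neutral zero_neq_one)
    then obtain q where "q \<in> S" "u q > 0" using u0 by (auto simp: order_less_le)
    then have "0 < (\<Sum>p\<in>S. u p * ((y - p) \<bullet> (y - c)))"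
      using pos u0 assms by (intro sum_pos2[of S q]) auto
    then show False using weighted_sum by simp
  qed
  then obtain p where p: "p \<in> S" "(y - p) \<bullet> (y - c) \<le> 0" by blast
  have "(norm (y - midpoint p c))\<^sup>2 \<le> (dist p c / 2)\<^sup>2"
    using norm_minus_midpoint_power2[of y p c] p(2) by linarith
  then have "norm (y - midpoint p c) \<le> dist p c / 2" by (rule power2_le_imp_le) simp
  then show "y \<in> (\<Union>p\<in>S. cball (midpoint p c) (dist p c / 2))"
    using p(1) by (auto simp: dist_norm norm_minus_commute)
qed

lemma mem_parallel_body_closed:
  fixes A :: "'a::euclidean_space set"
  assumes "closed A" "A \<noteq> {}"
  shows "z \<in> parallel_body A \<delta> \<longleftrightarrow> (\<exists>y\<in>A. dist z y \<le> \<delta> * sqrt DIM('a))"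
proof
  assume "z \<in> parallel_body A \<delta>"
  moreover obtain y where "y \<in> A" "infdist z A = dist z y"
    using infdist_attains_inf assms by blast
  ultimately show "\<exists>y\<in>A. dist z y \<le> \<delta> * sqrt DIM('a)"
    unfolding parallel_body_def by auto
next
  assume "\<exists>y\<in>A. dist z y \<le> \<delta> * sqrt DIM('a)"
  then obtain y where "y \<in> A" "dist z y \<le> \<delta> * sqrt DIM('a)" by blast
  then show "z \<in> parallel_body A \<delta>"
    unfolding parallel_body_def using infdist_le[of y A z] by simp
qed

lemma closed_parallel_body: "closed (parallel_body A \<delta>)"
  unfolding parallel_body_def
  by (intro closed_Collect_le continuous_on_infdist continuous_on_id continuous_on_const)

lemma parallel_body_convex_hull_subset:
  fixes S :: "'a::euclidean_space set"
  assumes "finite S" "S \<noteq> {}" "S \<subseteq> cball c r"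
  shows "parallel_body (convex hull S) \<delta>
    \<subseteq> (\<Union>p\<in>S. cball (midpoint p c) (r / 2 + \<delta> * sqrt DIM('a)))"
proof
  fix z
  assume "z \<in> parallel_body (convex hull S) \<delta>"
  moreover have "closed (convex hull S)"
    using assms(1) by (simp add: compact_imp_closed compact_convex_hull finite_imp_compact)
  moreover have "convex hull S \<noteq> {}" using assms(2) by simp
  ultimately obtain y where y: "y \<in> convex hull S" "dist z y \<le> \<delta> * sqrt DIM('a)"
    using mem_parallel_body_closed by blast
  then obtain p where p: "p \<in> S" "dist (midpoint p c) y \<le> dist p c / 2"
    using convex_hull_subset_UN_diameter_cballs[OF assms(1), of c] y(1) by auto
  have "dist p c \<le> r" using p(1) assms(3) by (auto simp: dist_commute)
  then have "dist (midpoint p c) z \<le> r / 2 + \<delta> * sqrt DIM('a)"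
    using p(2) y(2) dist_triangle[of "midpoint p c" z y] dist_commute[of z y] by linarith
  then show "z \<in> (\<Union>p\<in>S. cball (midpoint p c) (r / 2 + \<delta> * sqrt DIM('a)))"
    using p(1) by auto
qed

lemma measure_parallel_body_convex_hull_le:
  fixes S :: "'a::euclidean_space set"
  assumes "finite S" "S \<noteq> {}" "S \<subseteq> cball c r" "\<delta> \<ge> 0"
  shows "measure lebesgue (parallel_body (convex hull S) \<delta>)
    \<le> card S * (unit_ball_vol DIM('a) * (r / 2 + \<delta> * sqrt DIM('a)) ^ DIM('a))"
proof -
  define s where "s = r / 2 + \<delta> * sqrt DIM('a)"
  define U where "U = (\<Union>p\<in>S. cball (midpoint p c) s)"
  obtain p where "p \<in> S" using assms(2) by blast
  then have "dist c p \<le> r" using assms(3) by auto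
  then have "r \<ge> 0" using zero_le_dist[of c p] by linarith
  then have "s \<ge> 0" using assms(4) by (simp add: s_def)
  have "parallel_body (convex hull S) \<delta> \<subseteq> U"
    using parallel_body_convex_hull_subset[OF assms(1-3)] by (simp add: U_def s_def)
  moreover have "compact U" using assms(1) unfolding U_def by (intro compact_UN) auto
  ultimately have "compact (parallel_body (convex hull S) \<delta>)"
    by (meson bounded_subset closed_parallel_body compact_eq_bounded_closed)
  then have "measure lebesgue (parallel_body (convex hull S) \<delta>) \<le> measure lebesgue U"
    using \<open>_ \<subseteq> U\<close> \<open>compact U\<close> lmeasurable_compact
    by (intro measure_mono_fmeasurable) (auto simp: fmeasurable_def)
  also have "\<dots> \<le> (\<Sum>p\<in>S. measure lebesgue (cball (midpoint p c) s))"
    unfolding U_def using assms(1) by (intro measure_UNION_le) auto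
  also have "\<dots> = card S * (unit_ball_vol DIM('a) * s ^ DIM('a))"
    using \<open>s \<ge> 0\<close> by (simp add: content_cball)
  finally show ?thesis by (simp add: s_def)
qed

theorem theorem2p1:
  fixes D :: "'a::euclidean_space set" and x :: "nat \<Rightarrow> 'a" and n :: nat and \<delta> :: real
  assumes "bounded D"
    and "D \<in> sets lebesgue" and "measure lebesgue D = 1"
    and "n \<ge> 1"
    and "\<forall>i<n. x i \<in> D"
    and "\<delta> > 0"
  shows "measure lebesgue (parallel_body (convex hull (x ` {..<n})) \<delta>)
     < real n * ((rad D / sqrt (real DIM('a)) + 2 * \<delta>) * sqrt (pi * exp 1 / 2)) ^ DIM('a)"
proof -
  define d where "d = DIM('a)"
  define A where "A = rad D / sqrt d + 2 * \<delta>"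
  have "D \<noteq> {}" using assms(3) by auto
  then obtain c where c: "D \<subseteq> cball c (rad D)" using bounded_subset_cball_rad assms(1) by blast
  obtain y where "y \<in> D" using \<open>D \<noteq> {}\<close> by blast
  then have "dist c y \<le> rad D" using c by auto
  then have "rad D \<ge> 0" using zero_le_dist[of c y] by linarith
  then have "A > 0" using assms(6) by (simp add: A_def add_nonneg_pos)
  have "d \<ge> 1" by (simp add: d_def Suc_le_eq)
  then have radius: "rad D / 2 + \<delta> * sqrt d = sqrt d / 2 * A" by (simp add: A_def field_simps)
  have "x 0 \<in> x ` {..<n}" using assms(4) by simp
  then have "x ` {..<n} \<noteq> {}" by blast
  moreover have "x ` {..<n} \<subseteq> cball c (rad D)" using assms(5) c by auto
  ultimately have "measure lebesgue (parallel_body (convex hull (x ` {..<n})) \<delta>)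
      \<le> card (x ` {..<n}) * (unit_ball_vol d * (rad D / 2 + \<delta> * sqrt d) ^ d)"
    unfolding d_def using assms(6) by (intro measure_parallel_body_convex_hull_le) auto
  also have "\<dots> = card (x ` {..<n}) * (unit_ball_vol d * (sqrt d / 2) ^ d * A ^ d)"
    by (simp only: radius power_mult_distrib mult.assoc)
  also have "\<dots> \<le> n * (unit_ball_vol d * (sqrt d / 2) ^ d * A ^ d)"
    using \<open>A > 0\<close> card_image_le[of "{..<n}" x] by (intro mult_right_mono) auto
  also have "\<dots> < n * (sqrt (pi * exp 1 / 2) ^ d * A ^ d)"
    using unit_ball_vol_times_half_sqrt_dim_less[OF \<open>d \<ge> 1\<close>] \<open>A > 0\<close> assms(4) by simp
  finally show ?thesis by (simp add: A_def d_def power_mult_distrib mult.commute)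
qed

end
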